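(* Let $X$ be a real Banach space, $K\subset X$ compact, $\lambda_1,\dots,\lambda_m\in X^*$ with $\|\lambda_j\|_{X^*}=1$, $f\in K$, $w:=\lambda(f)$, and assume $R(K_w)_X\neq0$. Define on $X$ the loss $$\mathcal{L}_K(g):=\|\lambda(g)-w\|+\operatorname{dist}(g,K)_X .$$ Let $C>2$ and let $\delta>0$ satisfy $$2\delta+2R(K(w,4\delta))_X\le C\,R(K_w)_X$$ (which holds for all sufficiently small $\delta>0$). Let $\Sigma\subset X$ satisfy $\operatorname{dist}(K,\Sigma)_X<\delta$ and let $\hat f\in\mathop{\rm argmin}_{g\in\Sigma}\mathcal{L}_K(g)$ be any minimizer. Then $\|f-\hat f\|_X\le C\,R(K_w)_X$.
   Context: For $g\in X$, $\lambda(g):=(\lambda_1(g),\dots,\lambda_m(g))$; on $\mathbb{R}^m$, $\|v\|:=\big[\frac1m\sum_{j=1}^m|v_j|^2\big]^{1/2}$. $\operatorname{dist}(g,K)_X:=\inf_{h\in K}\|g-h\|_X$; for $A,B\subset X$, $\operatorname{dist}(A,B)_X:=\sup_{a\in A}\inf_{b\in B}\|a-b\|_X$. $K_w:=\{h\in K:\lambda(h)=w\}$, $K(w,\varepsilon):=\bigcup_{w'\in\mathbb{R}^m,\ \|w'-w\|\le\varepsilon}K_{w'}$. For $S\subset X$, $R(S)_X:=\inf\{r:\ S\subset B(z,r)_X\text{ for some }z\in X\}$ (Chebyshev radius). *)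

theory Defs
  imports "HOL-Analysis.Analysis"
begin

text \<open>Vectors in R^m are represented as functions nat => real, only indices j < m matter.\<close>

definition mnorm :: "nat \<Rightarrow> (nat \<Rightarrow> real) \<Rightarrow> real" where
  "mnorm m v = sqrt ((1 / real m) * (\<Sum>j<m. \<bar>v j\<bar>^2))"

definition meas :: "(nat \<Rightarrow> ('a::real_normed_vector \<Rightarrow>\<^sub>L real)) \<Rightarrow> 'a \<Rightarrow> (nat \<Rightarrow> real)" where
  "meas lam g = (\<lambda>j. blinfun_apply (lam j) g)"

definition fiber :: "nat \<Rightarrow> (nat \<Rightarrow> ('a::real_normed_vector \<Rightarrow>\<^sub>L real)) \<Rightarrow> 'a set \<Rightarrow> (nat \<Rightarrow> real) \<Rightarrow> 'a set" where
  "fiber m lam K w = {h \<in> K. \<forall>j<m. meas lam h j = w j}"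

definition fiber_nbhd :: "nat \<Rightarrow> (nat \<Rightarrow> ('a::real_normed_vector \<Rightarrow>\<^sub>L real)) \<Rightarrow> 'a set \<Rightarrow> (nat \<Rightarrow> real) \<Rightarrow> real \<Rightarrow> 'a set" where
  "fiber_nbhd m lam K w eps = (\<Union>w'\<in>{w'. mnorm m (\<lambda>j. w' j - w j) \<le> eps}. fiber m lam K w')"

definition cheb_radius :: "'a::real_normed_vector set \<Rightarrow> real" where
  "cheb_radius S = Inf {r. \<exists>z. S \<subseteq> cball z r}"

definition set_dist_dir :: "'a::real_normed_vector set \<Rightarrow> 'a set \<Rightarrow> real" where
  "set_dist_dir A B = (SUP a\<in>A. infdist a B)"

definition lossK :: "nat \<Rightarrow> (nat \<Rightarrow> ('a::real_normed_vector \<Rightarrow>\<^sub>L real)) \<Rightarrow> 'a set \<Rightarrow> (nat \<Rightarrow> real) \<Rightarrow> 'a \<Rightarrow> real" where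
  "lossK m lam K w g = mnorm m (\<lambda>j. meas lam g j - w j) + infdist g K"

end

theory Submission
  imports Defs
begin

text \<open>Since \<Sigma> comes within \<delta> of f, some g \<in> \<Sigma> has loss below 2\<delta>, hence so has the minimizer
  fhat. A loss below 2\<delta> yields h \<in> K with \<parallel>fhat - h\<parallel> < 2\<delta> and \<parallel>\<lambda>(h) - w\<parallel> < 2\<delta>, because the
  unit-norm functionals make \<lambda> 1-Lipschitz for the normalized Euclidean norm. Thus f and h both
  lie in K(w, 4\<delta>), so \<parallel>f - h\<parallel> \<le> 2 R(K(w, 4\<delta>)), and the triangle inequality through h concludes.
  The hypotheses R(K_w) \<noteq> 0 and C > 2 only make admissible \<delta> exist; the estimate does not use them.\<close>

lemma infdist_lessE:
  assumes "A \<noteq> {}" "infdist x A < d"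
  obtains y where "y \<in> A" "dist x y < d"
  using assms cINF_less_iff[of A "dist x" d] by (auto simp: infdist_notempty)

lemma infdist_le_set_dist_dir:
  assumes "bounded A" "B \<noteq> {}" "a \<in> A"
  shows "infdist a B \<le> set_dist_dir A B"
proof -
  obtain e where e: "\<forall>y\<in>A. dist a y \<le> e"
    using assms(1) bounded_any_center by blast
  have "infdist y B \<le> infdist a B + e" if "y \<in> A" for y
    using infdist_triangle[of y B a] e that by (fastforce simp: dist_commute)
  then have "bdd_above ((\<lambda>y. infdist y B) ` A)"
    by (intro bdd_aboveI[of _ "infdist a B + e"]) auto
  then show ?thesis
    unfolding set_dist_dir_def using assms(3) by (rule cSUP_upper2) simp
qed

lemma norm_diff_le_cheb_radius:
  assumes "bounded S" "a \<in> S" "b \<in> S"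
  shows "norm (a - b) \<le> 2 * cheb_radius S"
proof -
  obtain z r where "S \<subseteq> cball z r"
    using assms(1) bounded_subset_cball by blast
  then have nonempty: "{r. \<exists>z. S \<subseteq> cball z r} \<noteq> {}" by blast
  have "norm (a - b) / 2 \<le> cheb_radius S"
    unfolding cheb_radius_def
  proof (rule cInf_greatest[OF nonempty])
    fix r assume "r \<in> {r. \<exists>z. S \<subseteq> cball z r}"
    then obtain z where "S \<subseteq> cball z r" by blast
    then have "dist z a \<le> r" "dist z b \<le> r" using assms by auto
    moreover have "norm (a - b) \<le> dist z a + dist z b"
      by (metis dist_commute dist_norm dist_triangle)
    ultimately show "norm (a - b) / 2 \<le> r" by simp
  qed
  then show ?thesis by simp
qed

lemma mnorm_eq_L2_set: "mnorm m v = sqrt (1 / real m) * L2_set v {..<m}"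
  unfolding mnorm_def L2_set_def real_sqrt_mult[symmetric] by simp

lemma mnorm_nonneg: "0 \<le> mnorm m v"
  by (simp add: mnorm_eq_L2_set)

lemma mnorm_zero [simp]: "mnorm m (\<lambda>j. 0) = 0"
  by (simp add: mnorm_def)

lemma mnorm_triangle: "mnorm m (\<lambda>j. a j + b j) \<le> mnorm m a + mnorm m b"
  unfolding mnorm_eq_L2_set distrib_left[symmetric]
  by (intro mult_left_mono L2_set_triangle_ineq) simp

lemma meas_diff: "meas lam (x - y) = (\<lambda>j. meas lam x j - meas lam y j)"
  by (simp add: meas_def blinfun.diff_right)

lemma mnorm_meas_le_norm:
  assumes "\<forall>j<m. norm (lam j) \<le> 1"
  shows "mnorm m (meas lam x) \<le> norm x"
proof (cases "m = 0")
  case True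
  then show ?thesis by (simp add: mnorm_def)
next
  case False
  have "\<bar>meas lam x j\<bar>\<^sup>2 \<le> (norm x)\<^sup>2" if "j < m" for j
  proof (rule power_mono)
    have "\<bar>meas lam x j\<bar> \<le> norm (lam j) * norm x"
      unfolding meas_def by (metis norm_blinfun real_norm_def)
    also have "\<dots> \<le> norm x"
      using assms that by (simp add: mult_left_le_one_le)
    finally show "\<bar>meas lam x j\<bar> \<le> norm x" .
  qed simp
  then have "(\<Sum>j<m. \<bar>meas lam x j\<bar>\<^sup>2) \<le> real m * (norm x)\<^sup>2"
    using sum_mono[of "{..<m}" "\<lambda>j. \<bar>meas lam x j\<bar>\<^sup>2" "\<lambda>_. (norm x)\<^sup>2"] by simp
  then have "1 / real m * (\<Sum>j<m. \<bar>meas lam x j\<bar>\<^sup>2) \<le> (norm x)\<^sup>2"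
    using False by (simp add: field_simps)
  then show ?thesis
    unfolding mnorm_def by (metis real_sqrt_abs abs_norm_cancel real_sqrt_le_mono)
qed

lemma fiber_nbhd_subset: "fiber_nbhd m lam K w eps \<subseteq> K"
  unfolding fiber_nbhd_def fiber_def by auto

lemma fiber_nbhd_mono:
  assumes "eps \<le> eps'"
  shows "fiber_nbhd m lam K w eps \<subseteq> fiber_nbhd m lam K w eps'"
  unfolding fiber_nbhd_def using assms by force

lemma mem_fiber_nbhdI:
  assumes "h \<in> K" "mnorm m (\<lambda>j. meas lam h j - w j) \<le> eps"
  shows "h \<in> fiber_nbhd m lam K w eps"
  unfolding fiber_nbhd_def fiber_def using assms by force

lemma lossK_le_dist:
  assumes "\<forall>j<m. norm (lam j) \<le> 1" "f \<in> K" "w = meas lam f"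
  shows "lossK m lam K w g \<le> 2 * dist g f"
proof -
  have "mnorm m (\<lambda>j. meas lam g j - w j) \<le> norm (g - f)"
    using mnorm_meas_le_norm[OF assms(1), of "g - f"] assms(3) by (simp add: meas_diff)
  moreover have "infdist g K \<le> dist g f"
    using assms(2) by (rule infdist_le)
  ultimately show ?thesis
    unfolding lossK_def by (simp add: dist_norm)
qed

lemma lossK_lessE:
  assumes "\<forall>j<m. norm (lam j) \<le> 1" "K \<noteq> {}" "lossK m lam K w g < r"
  obtains h where "h \<in> fiber_nbhd m lam K w r" "dist g h < r"
proof -
  define e where "e = mnorm m (\<lambda>j. meas lam g j - w j)"
  have "infdist g K < r - e"
    using assms(3) unfolding lossK_def e_def by simp
  then obtain h where h: "h \<in> K" "dist g h < r - e"
    using assms(2) infdist_lessE by blast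
  have "mnorm m (\<lambda>j. meas lam h j - w j)
      = mnorm m (\<lambda>j. meas lam (h - g) j + (meas lam g j - w j))"
    by (simp add: meas_diff)
  also have "\<dots> \<le> mnorm m (meas lam (h - g)) + e"
    unfolding e_def by (rule mnorm_triangle)
  also have "\<dots> \<le> dist g h + e"
    using mnorm_meas_le_norm[OF assms(1), of "h - g"] by (simp add: dist_norm norm_minus_commute)
  finally have "h \<in> fiber_nbhd m lam K w r"
    using h by (intro mem_fiber_nbhdI) auto
  moreover have "dist g h < r"
    using h(2) mnorm_nonneg[of m "\<lambda>j. meas lam g j - w j"] unfolding e_def by linarith
  ultimately show ?thesis by (rule that)
qed

lemma lossK_minimizer_less:
  assumes "\<forall>j<m. norm (lam j) \<le> 1" "bounded K" "f \<in> K" "w = meas lam f"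
    and "set_dist_dir K \<Sigma> < \<delta>" "fhat \<in> \<Sigma>"
    and "\<forall>g\<in>\<Sigma>. lossK m lam K w fhat \<le> lossK m lam K w g"
  shows "lossK m lam K w fhat < 2 * \<delta>"
proof -
  have "infdist f \<Sigma> < \<delta>"
    using infdist_le_set_dist_dir[of K \<Sigma> f] assms(2,3,5,6) by fastforce
  then obtain g where "g \<in> \<Sigma>" "dist f g < \<delta>"
    using assms(6) infdist_lessE by blast
  moreover have "lossK m lam K w g \<le> 2 * dist g f"
    using assms(1,3,4) by (rule lossK_le_dist)
  ultimately show ?thesis
    using assms(7) by (fastforce simp: dist_commute)
qed

theorem theorem3p4:
  fixes K \<Sigma> :: "'a::banach set"
    and lam :: "nat \<Rightarrow> ('a \<Rightarrow>\<^sub>L real)"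
    and m :: nat and f fhat :: 'a and w :: "nat \<Rightarrow> real"
    and C \<delta> :: real
  assumes "compact K"
    and "\<forall>j<m. norm (lam j) = 1"
    and "f \<in> K"
    and "w = meas lam f"
    and "cheb_radius (fiber m lam K w) \<noteq> 0"
    and "C > 2"
    and "\<delta> > 0"
    and "2 * \<delta> + 2 * cheb_radius (fiber_nbhd m lam K w (4 * \<delta>)) \<le> C * cheb_radius (fiber m lam K w)"
    and "set_dist_dir K \<Sigma> < \<delta>"
    and "fhat \<in> \<Sigma>"
    and "\<forall>g\<in>\<Sigma>. lossK m lam K w fhat \<le> lossK m lam K w g"
  shows "norm (f - fhat) \<le> C * cheb_radius (fiber m lam K w)"
proof -
  let ?N = "fiber_nbhd m lam K w (4 * \<delta>)"
  have lam: "\<forall>j<m. norm (lam j) \<le> 1" using assms(2) by simp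
  have "bounded K" using assms(1) by (rule compact_imp_bounded)
  have "lossK m lam K w fhat < 2 * \<delta>"
    using lossK_minimizer_less[OF lam \<open>bounded K\<close> assms(3,4,9,10,11)] .
  then obtain h where h: "h \<in> fiber_nbhd m lam K w (2 * \<delta>)" and fhat_h: "dist fhat h < 2 * \<delta>"
    using lossK_lessE[OF lam] assms(3) by blast
  have "h \<in> ?N"
    using h fiber_nbhd_mono[of "2 * \<delta>" "4 * \<delta>" m lam K w] assms(7) by auto
  have "f \<in> ?N"
    using assms(3,4,7) by (intro mem_fiber_nbhdI) auto
  then have "norm (f - h) \<le> 2 * cheb_radius ?N"
    using \<open>h \<in> ?N\<close> bounded_subset[OF \<open>bounded K\<close> fiber_nbhd_subset]
    by (intro norm_diff_le_cheb_radius)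
  moreover have "norm (f - fhat) \<le> norm (f - h) + norm (h - fhat)"
    using norm_triangle_ineq[of "f - h" "h - fhat"] by simp
  ultimately show ?thesis
    using fhat_h assms(8) by (simp add: dist_norm norm_minus_commute)
qed

end
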